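(* Let $R$ be a commutative noetherian ring and let $N$ be a spectral object of the category $R\text{-}Mod$ of $R$-modules. Let $M$ be a finitely generated $R$-module such that $\langle N\rangle\in Supp(M)$. Then $Hom_{R\text{-}Mod}(M,N)\neq 0$.
   Context: For an abelian category $\mathcal A$ and objects $X,Y$, write $X\prec Y$ if $X$ is a subquotient of a direct sum of finitely many copies of $Y$, and $X\approx Y$ if $X\prec Y\prec X$. $\langle X\rangle$ denotes the full subcategory of objects $Y$ with $X\not\prec Y$. A nonzero object $P$ is spectral if $Q\approx P$ for every nonzero subobject $Q\subseteq P$. For an object $M$, $Supp(M)=\{\langle P\rangle\mid P$ spectral, $P\prec M\}$. *)

theory Defs
  imports "HOL-Algebra.Algebra"
begin

definition mod_hom ::
  "('a, 'c) ring_scheme \<Rightarrow> ('a, 'b, 'd) module_scheme \<Rightarrow> ('a, 'e, 'f) module_scheme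
     \<Rightarrow> ('b \<Rightarrow> 'e) set" where
  "mod_hom R M N = {h. h \<in> carrier M \<rightarrow> carrier N \<and>
     (\<forall>x\<in>carrier M. \<forall>y\<in>carrier M. h (x \<oplus>\<^bsub>M\<^esub> y) = h x \<oplus>\<^bsub>N\<^esub> h y) \<and>
     (\<forall>a\<in>carrier R. \<forall>x\<in>carrier M. h (a \<odot>\<^bsub>M\<^esub> x) = a \<odot>\<^bsub>N\<^esub> h x)}"

definition fin_gen :: "('a, 'c) ring_scheme \<Rightarrow> ('a, 'b, 'd) module_scheme \<Rightarrow> bool" where
  "fin_gen R M \<longleftrightarrow> (\<exists>S. finite S \<and> S \<subseteq> carrier M \<and>
     (\<forall>m\<in>carrier M. \<exists>c. c \<in> S \<rightarrow> carrier R \<and>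
        m = finsum M (\<lambda>s. c s \<odot>\<^bsub>M\<^esub> s) S))"

text \<open>Direct sum of n copies of M, realised as functions nat \<Rightarrow> 'b supported on {..<n}.
  The multiplicative fields of the record are irrelevant for a module.\<close>
definition pow_mod :: "('a, 'b, 'd) module_scheme \<Rightarrow> nat \<Rightarrow> ('a, nat \<Rightarrow> 'b) module" where
  "pow_mod M n = module.make
     {f. (\<forall>i<n. f i \<in> carrier M) \<and> (\<forall>i\<ge>n. f i = \<zero>\<^bsub>M\<^esub>)}
     (\<lambda>f g. undefined) undefined
     (\<lambda>i. \<zero>\<^bsub>M\<^esub>)
     (\<lambda>f g i. f i \<oplus>\<^bsub>M\<^esub> g i)
     (\<lambda>a f i. if i < n then a \<odot>\<^bsub>M\<^esub> f i else \<zero>\<^bsub>M\<^esub>)"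

definition sub_mod :: "('a, 'b, 'd) module_scheme \<Rightarrow> 'b set \<Rightarrow> ('a, 'b, 'd) module_scheme" where
  "sub_mod M A = M\<lparr>carrier := A\<rparr>"

text \<open>X \<prec> Y: X is (isomorphic to) a subquotient of Y^n for some n, i.e. a quotient of a
  submodule A of Y^n, i.e. the image of a surjective R-linear map from A onto X.\<close>
definition subq :: "('a, 'c) ring_scheme \<Rightarrow> ('a, 'b, 'd) module_scheme
     \<Rightarrow> ('a, 'e, 'f) module_scheme \<Rightarrow> bool" where
  "subq R U V \<longleftrightarrow> (\<exists>n A h. submodule A R (pow_mod V n) \<and>
      h \<in> mod_hom R (sub_mod (pow_mod V n) A) U \<and> h ` A = carrier U)"

definition approx :: "('a, 'c) ring_scheme \<Rightarrow> ('a, 'b, 'd) module_scheme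
     \<Rightarrow> ('a, 'e, 'f) module_scheme \<Rightarrow> bool" where
  "approx R U V \<longleftrightarrow> subq R U V \<and> subq R V U"

definition spectral :: "('a, 'c) ring_scheme \<Rightarrow> ('a, 'b, 'd) module_scheme \<Rightarrow> bool" where
  "spectral R P \<longleftrightarrow> carrier P \<noteq> {\<zero>\<^bsub>P\<^esub>} \<and>
     (\<forall>Q. submodule Q R P \<and> Q \<noteq> {\<zero>\<^bsub>P\<^esub>} \<longrightarrow> approx R (sub_mod P Q) P)"

end

theory Submission
  imports Defs
begin

text \<open>Annihilators can only grow when passing to subquotients of finite direct sums, so
  Ann M \<subseteq> Ann P \<subseteq> Ann N. Of the spectrality hypotheses only N \<noteq> 0 is needed: since R is
  noetherian, a nonzero x \<in> N with maximal annihilator has a prime annihilator p \<supseteq> Ann M, and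
  the cyclic module Rx \<cong> R/p is torsion-free over R/p. A nonzero map M \<rightarrow> Rx is then built along
  a finite generating set. When a generator s is adjoined to a submodule L, either every t with
  ts \<in> L lies in p, and rs + m \<mapsto> rx is well defined; or some such t lies outside p, whence
  Ann L \<subseteq> p, and a nonzero g : L \<rightarrow> Rx extends to rs + m \<mapsto> r g(ts) + t g(m), which is still
  nonzero by torsion-freeness.\<close>

lemma (in module) smult_left_commute:
  "\<lbrakk>a \<in> carrier R; b \<in> carrier R; x \<in> carrier M\<rbrakk> \<Longrightarrow> a \<odot>\<^bsub>M\<^esub> (b \<odot>\<^bsub>M\<^esub> x) = b \<odot>\<^bsub>M\<^esub> (a \<odot>\<^bsub>M\<^esub> x)"
  by (metis R.m_comm smult_assoc1)

definition annihilator :: "('a, 'c) ring_scheme \<Rightarrow> ('a, 'b, 'd) module_scheme \<Rightarrow> 'b set \<Rightarrow> 'a set" where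
  "annihilator R M A = {a \<in> carrier R. \<forall>m\<in>A. a \<odot>\<^bsub>M\<^esub> m = \<zero>\<^bsub>M\<^esub>}"

lemma (in module) annihilator_ideal:
  assumes "A \<subseteq> carrier M"
  shows "ideal (annihilator R M A) R"
proof (rule idealI)
  show "subgroup (annihilator R M A) (add_monoid R)"
  proof
    fix a b assume "a \<in> annihilator R M A" "b \<in> annihilator R M A"
    then show "a \<otimes>\<^bsub>add_monoid R\<^esub> b \<in> annihilator R M A"
      using assms by (auto simp: annihilator_def smult_l_distr subsetD)
  next
    fix a assume "a \<in> annihilator R M A"
    then show "inv\<^bsub>add_monoid R\<^esub> a \<in> annihilator R M A"
      using assms by (auto simp: annihilator_def a_inv_def[symmetric] smult_l_minus subsetD)
  qed (use assms in \<open>auto simp: annihilator_def subsetD\<close>)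
next
  fix a x assume "a \<in> annihilator R M A" "x \<in> carrier R"
  then show "x \<otimes> a \<in> annihilator R M A" "a \<otimes> x \<in> annihilator R M A"
    using assms by (auto simp: annihilator_def smult_assoc1 R.m_comm[of a x] subsetD)
qed (rule R.ring_axioms)

lemma (in noetherian_ring) ideal_family_has_maximal:
  assumes "\<I> \<noteq> {}" "\<I> \<subseteq> {I. ideal I R}"
  obtains J where "J \<in> \<I>" "\<And>I. I \<in> \<I> \<Longrightarrow> J \<subseteq> I \<Longrightarrow> I = J"
proof -
  have "\<exists>J\<in>\<I>. \<forall>I\<in>\<I>. J \<subseteq> I \<longrightarrow> I = J"
  proof (rule subset_Zorn_nonempty[OF assms(1)])
    fix C assume "C \<noteq> {}" "subset.chain \<I> C"
    moreover from this have "subset.chain {I. ideal I R} C"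
      using assms(2) by (auto simp: subset_chain_def)
    ultimately show "\<Union>C \<in> \<I>"
      using ideal_chain_is_trivial by (auto simp: subset_chain_def)
  qed
  then show thesis using that by blast
qed

text \<open>Take x with maximal annihilator among the nonzero elements.\<close>
lemma (in module) ex_prime_annihilator:
  assumes "noetherian_ring R" and "carrier M \<noteq> {\<zero>\<^bsub>M\<^esub>}"
  obtains x where "x \<in> carrier M" "x \<noteq> \<zero>\<^bsub>M\<^esub>" "primeideal (annihilator R M {x}) R"
proof -
  interpret noetherian_ring R by fact
  define \<I> where "\<I> = {annihilator R M {y} | y. y \<in> carrier M \<and> y \<noteq> \<zero>\<^bsub>M\<^esub>}"
  have "\<I> \<noteq> {}" using assms(2) zero_closed unfolding \<I>_def by blast
  moreover have "\<I> \<subseteq> {I. ideal I R}" using annihilator_ideal unfolding \<I>_def by auto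
  ultimately obtain J where "J \<in> \<I>" and J_max: "\<And>I. I \<in> \<I> \<Longrightarrow> J \<subseteq> I \<Longrightarrow> I = J"
    using ideal_family_has_maximal by blast
  then obtain x where x: "x \<in> carrier M" "x \<noteq> \<zero>\<^bsub>M\<^esub>" and J: "J = annihilator R M {x}"
    unfolding \<I>_def by blast
  have "primeideal (annihilator R M {x}) R"
  proof (rule primeidealI)
    show "ideal (annihilator R M {x}) R" using x annihilator_ideal by simp
    show "carrier R \<noteq> annihilator R M {x}"
    proof
      assume "carrier R = annihilator R M {x}"
      then have "\<one> \<odot>\<^bsub>M\<^esub> x = \<zero>\<^bsub>M\<^esub>" using R.one_closed by (auto simp: annihilator_def)
      with x show False by simp
    qed
  next
    fix a b assume a: "a \<in> carrier R" and b: "b \<in> carrier R"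
      and ab: "a \<otimes> b \<in> annihilator R M {x}"
    show "a \<in> annihilator R M {x} \<or> b \<in> annihilator R M {x}"
    proof (cases "a \<in> annihilator R M {x}")
      case False
      then have ax: "a \<odot>\<^bsub>M\<^esub> x \<in> carrier M" "a \<odot>\<^bsub>M\<^esub> x \<noteq> \<zero>\<^bsub>M\<^esub>"
        using a x by (auto simp: annihilator_def)
      have "annihilator R M {x} \<subseteq> annihilator R M {a \<odot>\<^bsub>M\<^esub> x}"
        using a x by (auto simp: annihilator_def smult_assoc1 smult_left_commute[of _ a])
      then have "annihilator R M {a \<odot>\<^bsub>M\<^esub> x} = annihilator R M {x}"
        using J_max ax unfolding J \<I>_def by blast
      moreover have "b \<in> annihilator R M {a \<odot>\<^bsub>M\<^esub> x}"
        using ab a b x by (auto simp: annihilator_def smult_assoc1 smult_left_commute[of b])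
      ultimately show ?thesis by simp
    qed simp
  qed (rule is_cring)
  with x that show thesis by blast
qed

lemma pow_mod_simps:
  "carrier (pow_mod V n) = {f. (\<forall>i<n. f i \<in> carrier V) \<and> (\<forall>i\<ge>n. f i = \<zero>\<^bsub>V\<^esub>)}"
  "a \<odot>\<^bsub>pow_mod V n\<^esub> f = (\<lambda>i. if i < n then a \<odot>\<^bsub>V\<^esub> f i else \<zero>\<^bsub>V\<^esub>)"
  by (simp_all add: pow_mod_def module.defs)

lemma sub_mod_simps [simp]:
  "carrier (sub_mod M A) = A" "add (sub_mod M A) = add M" "smult (sub_mod M A) = smult M"
  by (simp_all add: sub_mod_def)

lemma subq_annihilator_subset:
  assumes U: "module R U" and V: "module R V" and "subq R U V"
  shows "annihilator R V (carrier V) \<subseteq> annihilator R U (carrier U)"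
proof
  fix a assume a: "a \<in> annihilator R V (carrier V)"
  obtain n A h where "submodule A R (pow_mod V n)"
    and h: "h \<in> mod_hom R (sub_mod (pow_mod V n) A) U" and onto: "h ` A = carrier U"
    using \<open>subq R U V\<close> unfolding subq_def by blast
  then have A: "A \<subseteq> carrier (pow_mod V n)"
    using subgroup.subset[OF submodule.axioms(1)] by fastforce
  have "a \<odot>\<^bsub>U\<^esub> u = \<zero>\<^bsub>U\<^esub>" if "u \<in> carrier U" for u
  proof -
    obtain f where f: "f \<in> A" "u = h f" using onto \<open>u \<in> carrier U\<close> by auto
    have a_R: "a \<in> carrier R" and zero_R: "\<zero>\<^bsub>R\<^esub> \<in> carrier R"
      using a cring.cring_simprules(2)[OF module.axioms(1)[OF U]] by (auto simp: annihilator_def)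
    have h_smult: "h (b \<odot>\<^bsub>pow_mod V n\<^esub> f) = b \<odot>\<^bsub>U\<^esub> h f" if "b \<in> carrier R" for b
      using h f that by (simp add: mod_hom_def)
    have "a \<odot>\<^bsub>U\<^esub> h f = h (a \<odot>\<^bsub>pow_mod V n\<^esub> f)" using h_smult[OF a_R] by simp
    also have "a \<odot>\<^bsub>pow_mod V n\<^esub> f = \<zero>\<^bsub>R\<^esub> \<odot>\<^bsub>pow_mod V n\<^esub> f"
      using a f A module.smult_l_null[OF V] by (fastforce simp: pow_mod_simps annihilator_def)
    also have "h \<dots> = \<zero>\<^bsub>R\<^esub> \<odot>\<^bsub>U\<^esub> h f" using h_smult[OF zero_R] .
    finally have "a \<odot>\<^bsub>U\<^esub> h f = \<zero>\<^bsub>R\<^esub> \<odot>\<^bsub>U\<^esub> h f" .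
    then show ?thesis using f that module.smult_l_null[OF U] by simp
  qed
  with a show "a \<in> annihilator R U (carrier U)" by (simp add: annihilator_def)
qed

definition line_sum :: "('a, 'c) ring_scheme \<Rightarrow> ('a, 'b, 'd) module_scheme \<Rightarrow> 'b \<Rightarrow> 'b set \<Rightarrow> 'b set" where
  "line_sum R M s L = {r \<odot>\<^bsub>M\<^esub> s \<oplus>\<^bsub>M\<^esub> m | r m. r \<in> carrier R \<and> m \<in> L}"

lemma line_sumI: "\<lbrakk>r \<in> carrier R; m \<in> L; y = r \<odot>\<^bsub>M\<^esub> s \<oplus>\<^bsub>M\<^esub> m\<rbrakk> \<Longrightarrow> y \<in> line_sum R M s L"
  unfolding line_sum_def by blast

lemma line_sumE:
  assumes "y \<in> line_sum R M s L"
  obtains r m where "r \<in> carrier R" "m \<in> L" "y = r \<odot>\<^bsub>M\<^esub> s \<oplus>\<^bsub>M\<^esub> m"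
  using assms unfolding line_sum_def by blast

lemma (in module) line_sum_submodule:
  assumes L: "submodule L R M" and s: "s \<in> carrier M"
  shows "submodule (line_sum R M s L) R M"
proof (rule submoduleI)
  have Lc: "L \<subseteq> carrier M" using submoduleE(1)[OF L] .
  show "line_sum R M s L \<subseteq> carrier M"
    using Lc s by (auto elim!: line_sumE)
  show "\<zero>\<^bsub>M\<^esub> \<in> line_sum R M s L"
    by (rule line_sumI[of "\<zero>" _ "\<zero>\<^bsub>M\<^esub>"])
      (use s subgroup.one_closed[OF submodule.axioms(1)[OF L]] in auto)
  fix y y' a assume y: "y \<in> line_sum R M s L"
  then obtain r m where rm: "r \<in> carrier R" "m \<in> L" "y = r \<odot>\<^bsub>M\<^esub> s \<oplus>\<^bsub>M\<^esub> m"
    by (rule line_sumE)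
  have m: "m \<in> carrier M" using rm Lc by auto
  show "\<ominus>\<^bsub>M\<^esub> y \<in> line_sum R M s L"
    by (rule line_sumI[of "\<ominus> r" _ "\<ominus>\<^bsub>M\<^esub> m"])
      (use rm m s submoduleE(3)[OF L] in \<open>auto simp: smult_l_minus minus_add\<close>)
  show "a \<in> carrier R \<Longrightarrow> a \<odot>\<^bsub>M\<^esub> y \<in> line_sum R M s L"
    by (rule line_sumI[of "a \<otimes> r" _ "a \<odot>\<^bsub>M\<^esub> m"])
      (use rm m s submoduleE(4)[OF L] in \<open>auto simp: smult_r_distr smult_assoc1\<close>)
  assume "y' \<in> line_sum R M s L"
  then obtain r' m' where rm': "r' \<in> carrier R" "m' \<in> L" "y' = r' \<odot>\<^bsub>M\<^esub> s \<oplus>\<^bsub>M\<^esub> m'"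
    by (rule line_sumE)
  have m': "m' \<in> carrier M" using rm' Lc by auto
  show "y \<oplus>\<^bsub>M\<^esub> y' \<in> line_sum R M s L"
    by (rule line_sumI[of "r \<oplus> r'" _ "m \<oplus>\<^bsub>M\<^esub> m'"])
      (use rm rm' m m' s submoduleE(5)[OF L] in \<open>auto simp: smult_l_distr a_ac\<close>)
qed

definition lin_span :: "('a, 'c) ring_scheme \<Rightarrow> ('a, 'b, 'd) module_scheme \<Rightarrow> 'b set \<Rightarrow> 'b set" where
  "lin_span R M S = {finsum M (\<lambda>s. c s \<odot>\<^bsub>M\<^esub> s) S | c. c \<in> S \<rightarrow> carrier R}"

lemma (in module) lin_span_empty: "lin_span R M {} = {\<zero>\<^bsub>M\<^esub>}"
  unfolding lin_span_def by force

lemma (in module) lin_span_insert: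
  assumes "finite S" "S \<subseteq> carrier M" "s \<in> carrier M" "s \<notin> S"
  shows "lin_span R M (insert s S) = line_sum R M s (lin_span R M S)"
proof
  show "lin_span R M (insert s S) \<subseteq> line_sum R M s (lin_span R M S)"
  proof
    fix y assume "y \<in> lin_span R M (insert s S)"
    then obtain c where c: "c \<in> insert s S \<rightarrow> carrier R"
      and y: "y = finsum M (\<lambda>s. c s \<odot>\<^bsub>M\<^esub> s) (insert s S)"
      unfolding lin_span_def by auto
    have "finsum M (\<lambda>s. c s \<odot>\<^bsub>M\<^esub> s) S \<in> lin_span R M S"
      unfolding lin_span_def using c by auto
    moreover have "y = c s \<odot>\<^bsub>M\<^esub> s \<oplus>\<^bsub>M\<^esub> finsum M (\<lambda>s. c s \<odot>\<^bsub>M\<^esub> s) S"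
      unfolding y using c assms by (subst finsum_insert) (auto simp: Pi_def)
    ultimately show "y \<in> line_sum R M s (lin_span R M S)"
      using c by (intro line_sumI) auto
  qed
next
  show "line_sum R M s (lin_span R M S) \<subseteq> lin_span R M (insert s S)"
  proof
    fix y assume "y \<in> line_sum R M s (lin_span R M S)"
    then obtain r c where r: "r \<in> carrier R" and c: "c \<in> S \<rightarrow> carrier R"
      and y: "y = r \<odot>\<^bsub>M\<^esub> s \<oplus>\<^bsub>M\<^esub> finsum M (\<lambda>s. c s \<odot>\<^bsub>M\<^esub> s) S"
      unfolding lin_span_def by (auto elim!: line_sumE)
    have "finsum M (\<lambda>s. c s \<odot>\<^bsub>M\<^esub> s) S = finsum M (\<lambda>t. (c(s := r)) t \<odot>\<^bsub>M\<^esub> t) S"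
      using c assms by (intro finsum_cong) (auto simp: Pi_def simp_implies_def)
    then have "y = finsum M (\<lambda>t. (c(s := r)) t \<odot>\<^bsub>M\<^esub> t) (insert s S)"
      unfolding y using r c assms by (subst finsum_insert) (auto simp: Pi_def)
    moreover have "c(s := r) \<in> insert s S \<rightarrow> carrier R" using r c by auto
    ultimately show "y \<in> lin_span R M (insert s S)" unfolding lin_span_def by blast
  qed
qed

lemma (in module) zero_submodule: "submodule {\<zero>\<^bsub>M\<^esub>} R M"
  by (rule submoduleI) auto

lemma (in module) lin_span_submodule:
  assumes "finite S" "S \<subseteq> carrier M"
  shows "submodule (lin_span R M S) R M"
  using assms
  by (induction S rule: finite_induct)
    (simp_all add: lin_span_empty zero_submodule lin_span_insert line_sum_submodule)

lemma (in module) fin_gen_lin_span: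
  assumes "fin_gen R M"
  obtains S where "finite S" "S \<subseteq> carrier M" "lin_span R M S = carrier M"
proof -
  obtain S where S: "finite S" "S \<subseteq> carrier M"
    and gen: "\<forall>m\<in>carrier M. \<exists>c. c \<in> S \<rightarrow> carrier R \<and> m = finsum M (\<lambda>s. c s \<odot>\<^bsub>M\<^esub> s) S"
    using assms unfolding fin_gen_def by blast
  have "carrier M \<subseteq> lin_span R M S" using gen unfolding lin_span_def by blast
  moreover have "lin_span R M S \<subseteq> carrier M" using submoduleE(1)[OF lin_span_submodule[OF S]] .
  ultimately show thesis using that S by blast
qed

lemma (in module) zero_mod_hom: "(\<lambda>_. \<zero>\<^bsub>M\<^esub>) \<in> mod_hom R A M"
  unfolding mod_hom_def by auto

lemma (in module) mod_hom_scale: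
  assumes g: "g \<in> mod_hom R A M" and t: "t \<in> carrier R"
  shows "(\<lambda>y. t \<odot>\<^bsub>M\<^esub> g y) \<in> mod_hom R A M"
  using assms unfolding mod_hom_def by (auto simp: Pi_def smult_r_distr smult_left_commute)

lemma (in module) mod_hom_extend_line_sum_well_defined:
  assumes N: "module R N" and L: "submodule L R M" and s: "s \<in> carrier M"
    and g: "g \<in> mod_hom R (sub_mod M L) N" and v: "v \<in> carrier N"
    and compat: "\<And>r. \<lbrakk>r \<in> carrier R; r \<odot>\<^bsub>M\<^esub> s \<in> L\<rbrakk> \<Longrightarrow> g (r \<odot>\<^bsub>M\<^esub> s) = r \<odot>\<^bsub>N\<^esub> v"
    and r: "r \<in> carrier R" "r' \<in> carrier R" and m: "m \<in> L" "m' \<in> L"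
    and eq: "r \<odot>\<^bsub>M\<^esub> s \<oplus>\<^bsub>M\<^esub> m = r' \<odot>\<^bsub>M\<^esub> s \<oplus>\<^bsub>M\<^esub> m'"
  shows "r \<odot>\<^bsub>N\<^esub> v \<oplus>\<^bsub>N\<^esub> g m = r' \<odot>\<^bsub>N\<^esub> v \<oplus>\<^bsub>N\<^esub> g m'"
proof -
  interpret N: module R N by (rule N)
  have mc: "m \<in> carrier M" "m' \<in> carrier M" using m submoduleE(1)[OF L] by auto
  define d where "d = r \<ominus> r'"
  have d: "d \<in> carrier R" using r by (simp add: d_def)
  have "m' = (r' \<odot>\<^bsub>M\<^esub> s \<oplus>\<^bsub>M\<^esub> m') \<oplus>\<^bsub>M\<^esub> \<ominus>\<^bsub>M\<^esub> (r' \<odot>\<^bsub>M\<^esub> s)"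
    using r s mc by (simp add: a_ac r_neg)
  also have "\<dots> = d \<odot>\<^bsub>M\<^esub> s \<oplus>\<^bsub>M\<^esub> m"
    unfolding eq[symmetric] d_def using r s mc
    by (simp add: R.minus_eq smult_l_distr smult_l_minus a_ac)
  finally have m'_eq: "m' = d \<odot>\<^bsub>M\<^esub> s \<oplus>\<^bsub>M\<^esub> m" .
  then have "d \<odot>\<^bsub>M\<^esub> s = m' \<oplus>\<^bsub>M\<^esub> \<ominus>\<^bsub>M\<^esub> m"
    using d s mc by (simp add: a_assoc r_neg)
  then have ds: "d \<odot>\<^bsub>M\<^esub> s \<in> L"
    using m submoduleE(3,5)[OF L] by simp
  have gc: "g m \<in> carrier N" using g m by (auto simp: mod_hom_def)
  have "g m' = d \<odot>\<^bsub>N\<^esub> v \<oplus>\<^bsub>N\<^esub> g m"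
    using g ds m compat[OF d ds] unfolding m'_eq by (simp add: mod_hom_def)
  moreover have "r = d \<oplus> r'" using r by (simp add: d_def R.minus_eq R.a_ac R.r_neg)
  ultimately show ?thesis using d r v gc by (simp add: N.smult_l_distr N.a_ac)
qed

lemma (in module) mod_hom_extend_line_sum:
  assumes N: "module R N" and L: "submodule L R M" and s: "s \<in> carrier M"
    and g: "g \<in> mod_hom R (sub_mod M L) N" and v: "v \<in> carrier N"
    and compat: "\<And>r. \<lbrakk>r \<in> carrier R; r \<odot>\<^bsub>M\<^esub> s \<in> L\<rbrakk> \<Longrightarrow> g (r \<odot>\<^bsub>M\<^esub> s) = r \<odot>\<^bsub>N\<^esub> v"
  obtains h where "h \<in> mod_hom R (sub_mod M (line_sum R M s L)) N"
    and "\<And>r m. \<lbrakk>r \<in> carrier R; m \<in> L\<rbrakk> \<Longrightarrow> h (r \<odot>\<^bsub>M\<^esub> s \<oplus>\<^bsub>M\<^esub> m) = r \<odot>\<^bsub>N\<^esub> v \<oplus>\<^bsub>N\<^esub> g m"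
proof -
  interpret N: module R N by (rule N)
  have Lc: "L \<subseteq> carrier M" using submoduleE(1)[OF L] .
  have gc: "g m \<in> carrier N" if "m \<in> L" for m using g that by (auto simp: mod_hom_def)
  define h where "h y = (SOME z. \<exists>r m. r \<in> carrier R \<and> m \<in> L \<and>
    y = r \<odot>\<^bsub>M\<^esub> s \<oplus>\<^bsub>M\<^esub> m \<and> z = r \<odot>\<^bsub>N\<^esub> v \<oplus>\<^bsub>N\<^esub> g m)" for y
  have h_eq: "h (r \<odot>\<^bsub>M\<^esub> s \<oplus>\<^bsub>M\<^esub> m) = r \<odot>\<^bsub>N\<^esub> v \<oplus>\<^bsub>N\<^esub> g m"
    if "r \<in> carrier R" "m \<in> L" for r m
    unfolding h_def
    by (rule someI2[where a = "r \<odot>\<^bsub>N\<^esub> v \<oplus>\<^bsub>N\<^esub> g m"])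
      (use that in blast, use that mod_hom_extend_line_sum_well_defined[OF N L s g v compat] in metis)
  have "h \<in> mod_hom R (sub_mod M (line_sum R M s L)) N"
    unfolding mod_hom_def sub_mod_simps
  proof (intro CollectI conjI ballI)
    show "h \<in> line_sum R M s L \<rightarrow> carrier N"
      using h_eq gc v by (auto elim!: line_sumE)
  next
    fix y y' assume "y \<in> line_sum R M s L" "y' \<in> line_sum R M s L"
    then obtain r m r' m' where rm: "r \<in> carrier R" "m \<in> L" "y = r \<odot>\<^bsub>M\<^esub> s \<oplus>\<^bsub>M\<^esub> m"
      and rm': "r' \<in> carrier R" "m' \<in> L" "y' = r' \<odot>\<^bsub>M\<^esub> s \<oplus>\<^bsub>M\<^esub> m'"
      by (auto elim!: line_sumE)
    have "y \<oplus>\<^bsub>M\<^esub> y' = (r \<oplus> r') \<odot>\<^bsub>M\<^esub> s \<oplus>\<^bsub>M\<^esub> (m \<oplus>\<^bsub>M\<^esub> m')"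
      using rm rm' s subsetD[OF Lc] by (simp add: smult_l_distr a_ac)
    moreover have "g (m \<oplus>\<^bsub>M\<^esub> m') = g m \<oplus>\<^bsub>N\<^esub> g m'"
      using g rm(2) rm'(2) by (simp add: mod_hom_def)
    ultimately show "h (y \<oplus>\<^bsub>M\<^esub> y') = h y \<oplus>\<^bsub>N\<^esub> h y'"
      using rm rm' h_eq gc v submoduleE(5)[OF L] by (simp add: N.smult_l_distr N.a_ac)
  next
    fix a y assume a: "a \<in> carrier R" and "y \<in> line_sum R M s L"
    then obtain r m where rm: "r \<in> carrier R" "m \<in> L" "y = r \<odot>\<^bsub>M\<^esub> s \<oplus>\<^bsub>M\<^esub> m"
      by (auto elim!: line_sumE)
    have "a \<odot>\<^bsub>M\<^esub> y = (a \<otimes> r) \<odot>\<^bsub>M\<^esub> s \<oplus>\<^bsub>M\<^esub> a \<odot>\<^bsub>M\<^esub> m"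
      using a rm s subsetD[OF Lc] by (simp add: smult_r_distr smult_assoc1)
    moreover have "g (a \<odot>\<^bsub>M\<^esub> m) = a \<odot>\<^bsub>N\<^esub> g m"
      using g a rm(2) by (simp add: mod_hom_def)
    ultimately show "h (a \<odot>\<^bsub>M\<^esub> y) = a \<odot>\<^bsub>N\<^esub> h y"
      using a rm h_eq gc v submoduleE(4)[OF L] by (simp add: N.smult_r_distr N.smult_assoc1)
  qed
  with h_eq that show thesis by blast
qed

definition cyclic_submodule :: "('a, 'c) ring_scheme \<Rightarrow> ('a, 'b, 'd) module_scheme \<Rightarrow> 'b \<Rightarrow> 'b set" where
  "cyclic_submodule R M x = {r \<odot>\<^bsub>M\<^esub> x | r. r \<in> carrier R}"

lemma (in module) cyclic_submodule_eq_line_sum: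
  "x \<in> carrier M \<Longrightarrow> cyclic_submodule R M x = line_sum R M x {\<zero>\<^bsub>M\<^esub>}"
  unfolding cyclic_submodule_def line_sum_def by force

lemma (in module) cyclic_submodule_submodule:
  "x \<in> carrier M \<Longrightarrow> submodule (cyclic_submodule R M x) R M"
  by (simp add: cyclic_submodule_eq_line_sum line_sum_submodule zero_submodule)

lemma (in module) cyclic_submodule_torsion_free:
  assumes p: "primeideal (annihilator R M {x}) R" and x: "x \<in> carrier M"
    and y: "y \<in> cyclic_submodule R M x"
    and t: "t \<in> carrier R" "t \<notin> annihilator R M {x}" "t \<odot>\<^bsub>M\<^esub> y = \<zero>\<^bsub>M\<^esub>"
  shows "y = \<zero>\<^bsub>M\<^esub>"
proof -
  obtain c where c: "c \<in> carrier R" "y = c \<odot>\<^bsub>M\<^esub> x"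
    using y unfolding cyclic_submodule_def by blast
  then have "t \<otimes> c \<in> annihilator R M {x}"
    using t x by (simp add: annihilator_def smult_assoc1)
  then have "c \<in> annihilator R M {x}"
    using primeideal.I_prime[OF p t(1) c(1)] t(2) by blast
  then show ?thesis using c by (simp add: annihilator_def)
qed

lemma (in module) annihilator_line_sum:
  assumes L: "submodule L R M" and s: "s \<in> carrier M"
    and a: "a \<in> annihilator R M L" and t: "t \<in> carrier R" "t \<odot>\<^bsub>M\<^esub> s \<in> L"
  shows "a \<otimes> t \<in> annihilator R M (line_sum R M s L)"
proof -
  have a_kills: "a \<in> carrier R" "\<And>m. m \<in> L \<Longrightarrow> a \<odot>\<^bsub>M\<^esub> m = \<zero>\<^bsub>M\<^esub>"
    using a by (auto simp: annihilator_def)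
  have "(a \<otimes> t) \<odot>\<^bsub>M\<^esub> (r \<odot>\<^bsub>M\<^esub> s \<oplus>\<^bsub>M\<^esub> m) = \<zero>\<^bsub>M\<^esub>"
    if "r \<in> carrier R" "m \<in> L" for r m
  proof -
    have "m \<in> carrier M" using that submoduleE(1)[OF L] by auto
    then have "(a \<otimes> t) \<odot>\<^bsub>M\<^esub> (r \<odot>\<^bsub>M\<^esub> s \<oplus>\<^bsub>M\<^esub> m)
        = r \<odot>\<^bsub>M\<^esub> (a \<odot>\<^bsub>M\<^esub> (t \<odot>\<^bsub>M\<^esub> s)) \<oplus>\<^bsub>M\<^esub> t \<odot>\<^bsub>M\<^esub> (a \<odot>\<^bsub>M\<^esub> m)"
      using a_kills(1) t(1) that(1) s
      by (simp add: smult_r_distr smult_assoc1 smult_left_commute[of _ r] smult_left_commute[of a t])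
    then show ?thesis using a_kills t that by simp
  qed
  then show ?thesis using a_kills(1) t(1) by (auto simp: annihilator_def elim!: line_sumE)
qed

lemma (in module) ex_nonzero_mod_hom_line_sum_from_generator:
  assumes N: "module R N" and x: "x \<in> carrier N" and p: "primeideal (annihilator R N {x}) R"
    and L: "submodule L R M" and s: "s \<in> carrier M"
    and ann: "\<And>t. \<lbrakk>t \<in> carrier R; t \<odot>\<^bsub>M\<^esub> s \<in> L\<rbrakk> \<Longrightarrow> t \<in> annihilator R N {x}"
  shows "\<exists>h\<in>mod_hom R (sub_mod M (line_sum R M s L)) N.
           h ` line_sum R M s L \<subseteq> cyclic_submodule R N x \<and> (\<exists>m\<in>line_sum R M s L. h m \<noteq> \<zero>\<^bsub>N\<^esub>)"
proof -
  interpret N: module R N by (rule N)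
  have compat: "(\<lambda>_. \<zero>\<^bsub>N\<^esub>) (r \<odot>\<^bsub>M\<^esub> s) = r \<odot>\<^bsub>N\<^esub> x"
    if "r \<in> carrier R" "r \<odot>\<^bsub>M\<^esub> s \<in> L" for r
    using ann[OF that] by (simp add: annihilator_def)
  obtain h where h: "h \<in> mod_hom R (sub_mod M (line_sum R M s L)) N"
    and h_eq: "\<And>r m. \<lbrakk>r \<in> carrier R; m \<in> L\<rbrakk> \<Longrightarrow>
      h (r \<odot>\<^bsub>M\<^esub> s \<oplus>\<^bsub>M\<^esub> m) = r \<odot>\<^bsub>N\<^esub> x \<oplus>\<^bsub>N\<^esub> \<zero>\<^bsub>N\<^esub>"
    using mod_hom_extend_line_sum[OF N L s N.zero_mod_hom x compat] by blast
  have L0: "\<zero>\<^bsub>M\<^esub> \<in> L" using subgroup.one_closed[OF submodule.axioms(1)[OF L]] by simp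
  have "x \<noteq> \<zero>\<^bsub>N\<^esub>"
    using primeideal.I_notcarr[OF p] by (auto simp: annihilator_def)
  then have "\<exists>m\<in>line_sum R M s L. h m \<noteq> \<zero>\<^bsub>N\<^esub>"
    using h_eq[OF R.one_closed L0] x L0 by (auto intro: line_sumI)
  moreover have "h ` line_sum R M s L \<subseteq> cyclic_submodule R N x"
    using h_eq x by (auto elim!: line_sumE simp: cyclic_submodule_def)
  ultimately show ?thesis using h by blast
qed

lemma (in module) ex_nonzero_mod_hom_line_sum_from_submodule:
  assumes N: "module R N" and x: "x \<in> carrier N" and p: "primeideal (annihilator R N {x}) R"
    and L: "submodule L R M" and s: "s \<in> carrier M"
    and t: "t \<in> carrier R" "t \<odot>\<^bsub>M\<^esub> s \<in> L" "t \<notin> annihilator R N {x}"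
    and g: "g \<in> mod_hom R (sub_mod M L) N" "g ` L \<subseteq> cyclic_submodule R N x"
    and m0: "m0 \<in> L" "g m0 \<noteq> \<zero>\<^bsub>N\<^esub>"
  shows "\<exists>h\<in>mod_hom R (sub_mod M (line_sum R M s L)) N.
           h ` line_sum R M s L \<subseteq> cyclic_submodule R N x \<and> (\<exists>m\<in>line_sum R M s L. h m \<noteq> \<zero>\<^bsub>N\<^esub>)"
proof -
  interpret N: module R N by (rule N)
  have Rx: "submodule (cyclic_submodule R N x) R N" using N.cyclic_submodule_submodule[OF x] .
  have g_smult: "g (r \<odot>\<^bsub>M\<^esub> m) = r \<odot>\<^bsub>N\<^esub> g m" if "r \<in> carrier R" "m \<in> L" for r m
    using g that by (simp add: mod_hom_def)
  define v where "v = g (t \<odot>\<^bsub>M\<^esub> s)"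
  have v: "v \<in> cyclic_submodule R N x" using g(2) t(2) unfolding v_def by blast
  then have vc: "v \<in> carrier N" using N.submoduleE(1)[OF Rx] by blast
  have compat: "t \<odot>\<^bsub>N\<^esub> g (r \<odot>\<^bsub>M\<^esub> s) = r \<odot>\<^bsub>N\<^esub> v" if "r \<in> carrier R" "r \<odot>\<^bsub>M\<^esub> s \<in> L" for r
    using g_smult[OF t(1) that(2)] g_smult[OF that(1) t(2)] smult_left_commute[OF t(1) that(1) s]
    unfolding v_def by simp
  obtain h where h: "h \<in> mod_hom R (sub_mod M (line_sum R M s L)) N"
    and h_eq: "\<And>r m. \<lbrakk>r \<in> carrier R; m \<in> L\<rbrakk> \<Longrightarrow>
      h (r \<odot>\<^bsub>M\<^esub> s \<oplus>\<^bsub>M\<^esub> m) = r \<odot>\<^bsub>N\<^esub> v \<oplus>\<^bsub>N\<^esub> t \<odot>\<^bsub>N\<^esub> g m"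
    using mod_hom_extend_line_sum[OF N L s N.mod_hom_scale[OF g(1) t(1)] vc compat] by blast
  have "h ` line_sum R M s L \<subseteq> cyclic_submodule R N x"
  proof (rule image_subsetI)
    fix y assume "y \<in> line_sum R M s L"
    then obtain r m where r: "r \<in> carrier R" and m: "m \<in> L"
      and y: "y = r \<odot>\<^bsub>M\<^esub> s \<oplus>\<^bsub>M\<^esub> m"
      by (rule line_sumE)
    have "g m \<in> cyclic_submodule R N x" using g(2) m by blast
    then have "r \<odot>\<^bsub>N\<^esub> v \<oplus>\<^bsub>N\<^esub> t \<odot>\<^bsub>N\<^esub> g m \<in> cyclic_submodule R N x"
      using N.submoduleE(4)[OF Rx r v] N.submoduleE(4)[OF Rx t(1)] N.submoduleE(5)[OF Rx]
      by blast
    then show "h y \<in> cyclic_submodule R N x" unfolding y h_eq[OF r m] .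
  qed
  moreover have "h (\<zero> \<odot>\<^bsub>M\<^esub> s \<oplus>\<^bsub>M\<^esub> m0) \<noteq> \<zero>\<^bsub>N\<^esub>"
  proof -
    have gm0: "g m0 \<in> cyclic_submodule R N x" using g(2) m0(1) by blast
    then have "h (\<zero> \<odot>\<^bsub>M\<^esub> s \<oplus>\<^bsub>M\<^esub> m0) = t \<odot>\<^bsub>N\<^esub> g m0"
      using h_eq[OF R.zero_closed m0(1)] vc N.submoduleE(1)[OF Rx] t(1) by auto
    with gm0 show ?thesis
      using N.cyclic_submodule_torsion_free[OF p x _ t(1,3)] m0(2) by metis
  qed
  then have "\<exists>m\<in>line_sum R M s L. h m \<noteq> \<zero>\<^bsub>N\<^esub>"
    using line_sumI[OF R.zero_closed m0(1) refl] by blast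
  ultimately show ?thesis using h by blast
qed

lemma (in module) ex_nonzero_mod_hom_into_cyclic:
  assumes N: "module R N" and x: "x \<in> carrier N" and p: "primeideal (annihilator R N {x}) R"
    and S: "finite S" "S \<subseteq> carrier M"
    and ann: "annihilator R M (lin_span R M S) \<subseteq> annihilator R N {x}"
  shows "\<exists>h\<in>mod_hom R (sub_mod M (lin_span R M S)) N.
           h ` lin_span R M S \<subseteq> cyclic_submodule R N x \<and> (\<exists>m\<in>lin_span R M S. h m \<noteq> \<zero>\<^bsub>N\<^esub>)"
  using S ann
proof (induction S rule: finite_induct)
  case empty
  have "annihilator R M {\<zero>\<^bsub>M\<^esub>} = carrier R" by (auto simp: annihilator_def)
  moreover have "annihilator R N {x} \<subseteq> carrier R" by (auto simp: annihilator_def)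
  ultimately show ?case
    using empty primeideal.I_notcarr[OF p] by (simp add: lin_span_empty)
next
  case (insert s S)
  define L where "L = lin_span R M S"
  have s: "s \<in> carrier M" and L: "submodule L R M"
    using insert lin_span_submodule unfolding L_def by auto
  have span_eq: "lin_span R M (insert s S) = line_sum R M s L"
    using insert lin_span_insert unfolding L_def by auto
  show ?case
  proof (cases "\<forall>t\<in>carrier R. t \<odot>\<^bsub>M\<^esub> s \<in> L \<longrightarrow> t \<in> annihilator R N {x}")
    case True
    then show ?thesis
      unfolding span_eq by (intro ex_nonzero_mod_hom_line_sum_from_generator[OF N x p L s]) blast
  next
    case False
    then obtain t where t: "t \<in> carrier R" "t \<odot>\<^bsub>M\<^esub> s \<in> L" "t \<notin> annihilator R N {x}" by blast
    have "annihilator R M L \<subseteq> annihilator R N {x}"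
    proof
      fix a assume a: "a \<in> annihilator R M L"
      then have "a \<otimes> t \<in> annihilator R M (lin_span R M (insert s S))"
        using annihilator_line_sum[OF L s a t(1,2)] span_eq by simp
      then have "a \<otimes> t \<in> annihilator R N {x}" "a \<in> carrier R"
        using insert.prems(2) a by (auto simp: annihilator_def)
      then show "a \<in> annihilator R N {x}"
        using primeideal.I_prime[OF p] t(1,3) by blast
    qed
    then obtain g m0 where "g \<in> mod_hom R (sub_mod M L) N" "g ` L \<subseteq> cyclic_submodule R N x"
      and "m0 \<in> L" "g m0 \<noteq> \<zero>\<^bsub>N\<^esub>"
      using insert.IH insert.prems(1) unfolding L_def by auto
    then show ?thesis
      unfolding span_eq by (rule ex_nonzero_mod_hom_line_sum_from_submodule[OF N x p L s t])
  qed
qed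

theorem proposition4p1:
  fixes R :: "'a ring"
    and M :: "('a, 'm) module"
    and N :: "('a, 'n) module"
    and P :: "('a, 'p) module"
  assumes "cring R" and "noetherian_ring R"
    and "module R N" and "spectral R N"
    and "module R M" and "fin_gen R M"
    and "module R P" and "spectral R P" and "subq R P M" and "approx R P N"
  shows "\<exists>h\<in>mod_hom R M N. \<exists>x\<in>carrier M. h x \<noteq> \<zero>\<^bsub>N\<^esub>"
proof -
  interpret M: module R M by fact
  interpret N: module R N by fact
  have "carrier N \<noteq> {\<zero>\<^bsub>N\<^esub>}" using \<open>spectral R N\<close> unfolding spectral_def by blast
  then obtain x where x: "x \<in> carrier N" and p: "primeideal (annihilator R N {x}) R"
    using N.ex_prime_annihilator[OF \<open>noetherian_ring R\<close>] by metis
  obtain S where S: "finite S" "S \<subseteq> carrier M" and span: "lin_span R M S = carrier M"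
    using M.fin_gen_lin_span[OF \<open>fin_gen R M\<close>] by blast
  have "annihilator R M (carrier M) \<subseteq> annihilator R P (carrier P)"
    using subq_annihilator_subset \<open>module R P\<close> \<open>module R M\<close> \<open>subq R P M\<close> by blast
  also have "\<dots> \<subseteq> annihilator R N (carrier N)"
    using subq_annihilator_subset \<open>module R N\<close> \<open>module R P\<close> \<open>approx R P N\<close>
    unfolding approx_def by blast
  also have "\<dots> \<subseteq> annihilator R N {x}" using x by (auto simp: annihilator_def)
  finally have "annihilator R M (lin_span R M S) \<subseteq> annihilator R N {x}" unfolding span .
  then have "\<exists>h\<in>mod_hom R (sub_mod M (carrier M)) N. \<exists>m\<in>carrier M. h m \<noteq> \<zero>\<^bsub>N\<^esub>"
    using M.ex_nonzero_mod_hom_into_cyclic[OF \<open>module R N\<close> x p S] unfolding span by blast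
  moreover have "sub_mod M (carrier M) = M" by (simp add: sub_mod_def)
  ultimately show ?thesis by simp
qed

end
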